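(* For all $n\ge 0$, the quadruple of statistics $(\operatorname{asc},\operatorname{des},\operatorname{MNA},\operatorname{MND})$ has the same distribution on $S_n(231,312)$ as on $S_n(213,231)$, i.e. $$\sum_{\pi\in S_n(231,312)} t_1^{\operatorname{asc}(\pi)}t_2^{\operatorname{des}(\pi)}t_3^{\operatorname{MNA}(\pi)}t_4^{\operatorname{MND}(\pi)}=\sum_{\sigma\in S_n(213,231)} t_1^{\operatorname{asc}(\sigma)}t_2^{\operatorname{des}(\sigma)}t_3^{\operatorname{MNA}(\sigma)}t_4^{\operatorname{MND}(\sigma)}.$$
   Context: For $n\ge 0$, $S_n$ denotes the set of permutations $\pi=\pi_1\cdots\pi_n$ of $[n]=\{1,\dots,n\}$. $\pi$ avoids a pattern $\tau\in S_k$ if no subsequence $\pi_{i_1}\cdots\pi_{i_k}$ ($i_1<\dots<i_k$) satisfies $\pi_{i_a}<\pi_{i_b}\iff\tau_a<\tau_b$; $S_n(\tau,\rho)$ is the set of permutations in $S_n$ avoiding both $\tau$ and $\rho$. $\operatorname{asc}(\pi)$ (resp. $\operatorname{des}(\pi)$) is the number of $i\in[n-1]$ with $\pi_i<\pi_{i+1}$ (resp. $\pi_i>\pi_{i+1}$). $\operatorname{MNA}(\pi)$ is the maximum size of a set $I\subseteq[n-1]$ such that $\pi_i<\pi_{i+1}$ for all $i\in I$ and $|i-j|\ge 2$ for distinct $i,j\in I$; $\operatorname{MND}(\pi)$ is defined analogously with $\pi_i>\pi_{i+1}$. *)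

theory Defs
  imports Main
begin

text \<open>Permutations of [n] are represented as lists pi = [pi_1,...,pi_n] (0-based list indexing).\<close>

definition perms :: "nat \<Rightarrow> nat list set" where
  "perms n = {xs. distinct xs \<and> set xs = {1..n}}"

definition contains :: "nat list \<Rightarrow> nat list \<Rightarrow> bool" where
  "contains xs tau \<longleftrightarrow> (\<exists>idx :: nat \<Rightarrow> nat.
      strict_mono_on {..<length tau} idx \<and> (\<forall>a<length tau. idx a < length xs) \<and>
      (\<forall>a<length tau. \<forall>b<length tau.
          (xs ! idx a < xs ! idx b \<longleftrightarrow> tau ! a < tau ! b)))"

definition avoids :: "nat list \<Rightarrow> nat list \<Rightarrow> bool" where
  "avoids xs tau \<longleftrightarrow> \<not> contains xs tau"

definition Av2 :: "nat \<Rightarrow> nat list \<Rightarrow> nat list \<Rightarrow> nat list set" where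
  "Av2 n tau rho = {xs \<in> perms n. avoids xs tau \<and> avoids xs rho}"

definition ascset :: "nat list \<Rightarrow> nat set" where
  "ascset xs = {i. Suc i < length xs \<and> xs ! i < xs ! Suc i}"

definition desset :: "nat list \<Rightarrow> nat set" where
  "desset xs = {i. Suc i < length xs \<and> xs ! i > xs ! Suc i}"

definition asc :: "nat list \<Rightarrow> nat" where "asc xs = card (ascset xs)"
definition des :: "nat list \<Rightarrow> nat" where "des xs = card (desset xs)"

definition nonadjacent :: "nat set \<Rightarrow> bool" where
  "nonadjacent I \<longleftrightarrow> (\<forall>i\<in>I. \<forall>j\<in>I. i \<noteq> j \<longrightarrow> i + 2 \<le> j \<or> j + 2 \<le> i)"

definition MNA :: "nat list \<Rightarrow> nat" where
  "MNA xs = Max (card ` {I. I \<subseteq> ascset xs \<and> nonadjacent I})"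

definition MND :: "nat list \<Rightarrow> nat" where
  "MND xs = Max (card ` {I. I \<subseteq> desset xs \<and> nonadjacent I})"

end

theory Submission
  imports Defs
begin

text \<open>A permutation in either class is determined by its up-down word, and every word of length
  n - 1 occurs. Avoiding 231 and 312 means being layered: an increasing sequence of decreasing
  blocks, the blocks ending exactly at the ascents. Avoiding 213 and 231 means that every entry is
  the minimum or the maximum of the entries from it onwards, according as an ascent or a descent
  follows it. So the up-down word maps both classes bijectively onto the words of length n - 1, and
  all four statistics are functions of that word.\<close>

lemma perms_length: "xs \<in> perms n \<Longrightarrow> length xs = n"
  unfolding perms_def using distinct_card[of xs] by auto

lemma contains_length3_iff:
  "contains xs [p, q, r] \<longleftrightarrow> (\<exists>i j k. i < j \<and> j < k \<and> k < length xs \<and>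
     (xs!i < xs!j \<longleftrightarrow> p < q) \<and> (xs!j < xs!i \<longleftrightarrow> q < p) \<and>
     (xs!i < xs!k \<longleftrightarrow> p < r) \<and> (xs!k < xs!i \<longleftrightarrow> r < p) \<and>
     (xs!j < xs!k \<longleftrightarrow> q < r) \<and> (xs!k < xs!j \<longleftrightarrow> r < q))"
  (is "_ \<longleftrightarrow> (\<exists>i j k. ?embeds i j k)")
proof
  assume "contains xs [p, q, r]"
  then obtain idx where "strict_mono_on {..<3} idx" "\<forall>a<3. idx a < length xs"
    "\<forall>a<3. \<forall>b<3. xs ! idx a < xs ! idx b \<longleftrightarrow> [p, q, r] ! a < [p, q, r] ! b"
    unfolding contains_def by (auto simp: eval_nat_numeral)
  then have "?embeds (idx 0) (idx 1) (idx 2)"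
    by (auto simp: strict_mono_on_def numeral_eq_Suc)
  then show "\<exists>i j k. ?embeds i j k" by blast
next
  assume "\<exists>i j k. ?embeds i j k"
  then obtain i j k where "?embeds i j k" by blast
  then have "strict_mono_on {..<3} (nth [i, j, k])" "\<forall>a<3. [i, j, k] ! a < length xs"
    "\<forall>a<3. \<forall>b<3. xs ! ([i, j, k] ! a) < xs ! ([i, j, k] ! b) \<longleftrightarrow> [p, q, r] ! a < [p, q, r] ! b"
    by (auto simp: strict_mono_on_def numeral_eq_Suc less_Suc_eq)
  then show "contains xs [p, q, r]"
    unfolding contains_def by (metis length_Cons list.size(3) numeral_3_eq_3)
qed

lemma avoids_231_iff:
  "avoids xs [2, 3, 1] \<longleftrightarrow> \<not> (\<exists>i j k. i < j \<and> j < k \<and> k < length xs \<and> xs!k < xs!i \<and> xs!i < xs!j)"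
  unfolding avoids_def contains_length3_iff by (auto 0 4 intro: order.asym)

lemma avoids_312_iff:
  "avoids xs [3, 1, 2] \<longleftrightarrow> \<not> (\<exists>i j k. i < j \<and> j < k \<and> k < length xs \<and> xs!j < xs!k \<and> xs!k < xs!i)"
  unfolding avoids_def contains_length3_iff by (auto 0 4 intro: order.asym)

lemma avoids_213_iff:
  "avoids xs [2, 1, 3] \<longleftrightarrow> \<not> (\<exists>i j k. i < j \<and> j < k \<and> k < length xs \<and> xs!j < xs!i \<and> xs!i < xs!k)"
  unfolding avoids_def contains_length3_iff by (auto 0 4 intro: order.asym)

definition order_rank :: "(nat \<Rightarrow> nat \<Rightarrow> bool) \<Rightarrow> nat \<Rightarrow> nat \<Rightarrow> nat" where
  "order_rank R n a = Suc (card {b. b < n \<and> R b a})"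

definition perm_of_order :: "(nat \<Rightarrow> nat \<Rightarrow> bool) \<Rightarrow> nat \<Rightarrow> nat list" where
  "perm_of_order R n = map (order_rank R n) [0..<n]"

lemma length_perm_of_order [simp]: "length (perm_of_order R n) = n"
  by (simp add: perm_of_order_def)

lemma nth_perm_of_order [simp]: "a < n \<Longrightarrow> perm_of_order R n ! a = order_rank R n a"
  by (simp add: perm_of_order_def)

context
  fixes R :: "nat \<Rightarrow> nat \<Rightarrow> bool"
  assumes trans: "transp R" and asym: "asymp R" and total: "totalp R"
begin

lemma order_rank_less_iff:
  assumes "a < n" "b < n"
  shows "order_rank R n a < order_rank R n b \<longleftrightarrow> R a b"
proof
  assume "R a b"
  then have "{c. c < n \<and> R c a} \<subset> {c. c < n \<and> R c b}"
    using assms trans asym by (auto dest: transpD asympD)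
  then show "order_rank R n a < order_rank R n b"
    unfolding order_rank_def by (simp add: psubset_card_mono)
next
  assume less: "order_rank R n a < order_rank R n b"
  show "R a b"
  proof (rule ccontr)
    assume "\<not> R a b"
    then have "a = b \<or> R b a" using total by (auto dest: totalpD)
    then have "{c. c < n \<and> R c b} \<subseteq> {c. c < n \<and> R c a}"
      using trans by (auto dest: transpD)
    then show False
      using less unfolding order_rank_def by (simp add: card_mono leD)
  qed
qed

lemma perm_of_order_in_perms: "perm_of_order R n \<in> perms n"
proof -
  have "inj_on (order_rank R n) {..<n}"
  proof (rule inj_onI, rule ccontr)
    fix a b assume "a \<in> {..<n}" "b \<in> {..<n}" "order_rank R n a = order_rank R n b" "a \<noteq> b"
    then show False
      using total order_rank_less_iff[of a n b] order_rank_less_iff[of b n a] by (auto dest: totalpD)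
  qed
  then have distinct: "distinct (perm_of_order R n)"
    by (simp add: perm_of_order_def distinct_map lessThan_atLeast0)
  have "order_rank R n a \<in> {1..n}" if "a < n" for a
  proof -
    have "card {c. c < n \<and> R c a} \<le> card ({..<n} - {a})"
      using asym by (intro card_mono) (auto dest: asympD)
    also have "\<dots> = n - 1" using that by simp
    finally show ?thesis using that by (simp add: order_rank_def)
  qed
  then have "set (perm_of_order R n) \<subseteq> {1..n}"
    by (auto simp: perm_of_order_def)
  moreover have "card (set (perm_of_order R n)) = card {1..n}"
    using distinct_card[OF distinct] by simp
  ultimately show ?thesis
    using distinct by (simp add: perms_def card_subset_eq)
qed

end

lemma perms_nth_eq_rank:
  assumes "xs \<in> perms n" "a < n"
  shows "xs ! a = Suc (card {b. b < n \<and> xs!b < xs!a})"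
proof -
  have distinct: "distinct xs" and set: "set xs = {1..n}" and length: "length xs = n"
    using assms perms_length unfolding perms_def by auto
  have a: "xs!a \<in> {1..n}" using set length assms(2) nth_mem by blast
  have "nth xs ` {b. b < n \<and> xs!b < xs!a} = {v \<in> set xs. v < xs!a}"
    using length by (auto simp: set_conv_nth)
  also have "\<dots> = {1..<xs!a}" using set a by auto
  moreover have "inj_on (nth xs) {b. b < n \<and> xs!b < xs!a}"
    using distinct length by (intro inj_on_nth) auto
  ultimately have "card {b. b < n \<and> xs!b < xs!a} = card {1..<xs!a}"
    by (metis card_image)
  then show ?thesis using a by simp
qed

lemma perms_eq_perm_of_order:
  assumes "xs \<in> perms n" and "\<And>a b. a < n \<Longrightarrow> b < n \<Longrightarrow> xs!a < xs!b \<longleftrightarrow> R a b"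
  shows "xs = perm_of_order R n"
proof (rule nth_equalityI)
  show "length xs = length (perm_of_order R n)" using perms_length[OF assms(1)] by simp
next
  fix a assume "a < length xs"
  then have a: "a < n" using perms_length[OF assms(1)] by simp
  have "{b. b < n \<and> xs!b < xs!a} = {b. b < n \<and> R b a}" using assms(2) a by auto
  then show "xs ! a = perm_of_order R n ! a"
    using perms_nth_eq_rank[OF assms(1) a] a by (simp add: order_rank_def)
qed

definition updown :: "nat list \<Rightarrow> bool list" where
  "updown xs = map (\<lambda>i. xs!i < xs!Suc i) [0..<length xs - 1]"

definition ups :: "bool list \<Rightarrow> nat set" where
  "ups w = {i. i < length w \<and> w!i}"

definition downs :: "bool list \<Rightarrow> nat set" where
  "downs w = {i. i < length w \<and> \<not> w!i}"

lemma length_updown [simp]: "length (updown xs) = length xs - 1"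
  by (simp add: updown_def)

lemma nth_updown: "Suc i < length xs \<Longrightarrow> updown xs ! i \<longleftrightarrow> xs!i < xs!Suc i"
  by (simp add: updown_def less_diff_conv)

lemma in_ups_updown_iff: "i \<in> ups (updown xs) \<longleftrightarrow> Suc i < length xs \<and> xs!i < xs!Suc i"
  by (auto simp: ups_def nth_updown)

lemma ascset_eq_ups_updown: "ascset xs = ups (updown xs)"
  by (auto simp: ascset_def in_ups_updown_iff)

lemma desset_eq_downs_updown:
  assumes "distinct xs"
  shows "desset xs = downs (updown xs)"
proof -
  have "xs!Suc i < xs!i \<longleftrightarrow> \<not> xs!i < xs!Suc i" if "Suc i < length xs" for i
    using that nth_eq_iff_index_eq[OF assms, of i "Suc i"] by auto
  then show ?thesis
    by (auto simp: desset_def downs_def nth_updown less_diff_conv)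
qed

lemma updown_perm_of_order:
  assumes "transp R" "asymp R" "totalp R" "length w = n - 1" "\<And>i. R i (Suc i) \<longleftrightarrow> i \<in> ups w"
  shows "updown (perm_of_order R n) = w"
proof (rule nth_equalityI)
  show "length (updown (perm_of_order R n)) = length w" using assms(4) by simp
next
  fix i assume "i < length (updown (perm_of_order R n))"
  then have "Suc i < n" by simp
  then have "updown (perm_of_order R n) ! i \<longleftrightarrow> R i (Suc i)"
    by (simp add: nth_updown order_rank_less_iff[OF assms(1-3)])
  also have "\<dots> \<longleftrightarrow> w ! i" using assms(4,5) \<open>Suc i < n\<close> by (simp add: ups_def less_diff_conv)
  finally show "updown (perm_of_order R n) ! i = w ! i" by simp
qed

lemma nth_less_iff_from_ordered_pairs:
  fixes xs :: "'a::linorder list"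
  assumes "distinct xs" "asymp R" "totalp R"
    and forward: "\<And>a b. a < b \<Longrightarrow> b < length xs \<Longrightarrow> xs!a < xs!b \<longleftrightarrow> R a b"
    and "a < length xs" "b < length xs"
  shows "xs!a < xs!b \<longleftrightarrow> R a b"
proof (cases a b rule: linorder_cases)
  case less
  then show ?thesis using forward \<open>b < length xs\<close> by blast
next
  case equal
  then show ?thesis using asympD[OF \<open>asymp R\<close>, of a a] by auto
next
  case greater
  then have "xs!a \<noteq> xs!b" using assms(1,5,6) by (simp add: nth_eq_iff_index_eq)
  then have "xs!a < xs!b \<longleftrightarrow> \<not> R b a" using forward[OF greater \<open>a < length xs\<close>] by auto
  also have "\<dots> \<longleftrightarrow> R a b" using greater asympD[OF \<open>asymp R\<close>, of a b] totalpD[OF \<open>totalp R\<close>, of a b] by auto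
  finally show ?thesis .
qed

lemma bij_betw_updown_if_order_determined:
  assumes strict: "\<And>w. transp (R w)" "\<And>w. asymp (R w)" "\<And>w. totalp (R w)"
    and steps: "\<And>w i. R w i (Suc i) \<longleftrightarrow> i \<in> ups w"
    and realized: "\<And>w. perm_of_order (R w) n \<in> C"
    and determined: "\<And>xs a b. xs \<in> C \<Longrightarrow> a < n \<Longrightarrow> b < n \<Longrightarrow> xs!a < xs!b \<longleftrightarrow> R (updown xs) a b"
    and "C \<subseteq> perms n"
  shows "bij_betw updown C {w. length w = n - 1}"
proof (rule bij_betw_byWitness[where f' = "\<lambda>w. perm_of_order (R w) n"])
  show "\<forall>xs\<in>C. perm_of_order (R (updown xs)) n = xs"
    using determined \<open>C \<subseteq> perms n\<close> perms_eq_perm_of_order by (metis subsetD)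
  show "\<forall>w\<in>{w. length w = n - 1}. updown (perm_of_order (R w) n) = w"
    using updown_perm_of_order[OF strict(1-3) _ steps] by blast
  show "updown ` C \<subseteq> {w. length w = n - 1}"
    using \<open>C \<subseteq> perms n\<close> perms_length by auto
  show "(\<lambda>w. perm_of_order (R w) n) ` {w. length w = n - 1} \<subseteq> C"
    using realized by auto
qed

lemma exists_ascent_between:
  fixes xs :: "'a::linorder list"
  assumes "a < b" "b < length xs" "xs!a < xs!b"
  shows "\<exists>p. a \<le> p \<and> p < b \<and> xs!p < xs!Suc p"
  using assms
proof (induction b)
  case 0 then show ?case by simp
next
  case (Suc b)
  show ?case
  proof (cases "xs!b < xs!Suc b")
    case True then show ?thesis using Suc.prems by (intro exI[of _ b]) auto
  next
    case False
    then have "xs!a < xs!b" using Suc.prems by (meson not_less order_less_le_trans)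
    then have "a < b" using Suc.prems(1) by (cases "a = b") auto
    then show ?thesis using Suc.IH Suc.prems \<open>xs!a < xs!b\<close> by (meson Suc_lessD less_SucI)
  qed
qed

text \<open>The index of the block containing position a, when the blocks of a layered permutation end
  at the ascents of w.\<close>
definition layer :: "bool list \<Rightarrow> nat \<Rightarrow> nat" where
  "layer w a = card (ups w \<inter> {..<a})"

lemma layer_mono: "a \<le> b \<Longrightarrow> layer w a \<le> layer w b"
  unfolding layer_def by (intro card_mono) auto

lemma layer_less_iff:
  assumes "a \<le> b"
  shows "layer w a < layer w b \<longleftrightarrow> (\<exists>p\<in>ups w. a \<le> p \<and> p < b)"
proof -
  have sub: "ups w \<inter> {..<a} \<subseteq> ups w \<inter> {..<b}" using assms by auto
  have "layer w a < layer w b \<longleftrightarrow> ups w \<inter> {..<a} \<subset> ups w \<inter> {..<b}"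
  proof
    assume "layer w a < layer w b"
    then show "ups w \<inter> {..<a} \<subset> ups w \<inter> {..<b}" using sub unfolding layer_def by auto
  next
    assume "ups w \<inter> {..<a} \<subset> ups w \<inter> {..<b}"
    then show "layer w a < layer w b" unfolding layer_def by (simp add: psubset_card_mono)
  qed
  also have "\<dots> \<longleftrightarrow> (\<exists>p. p \<in> ups w \<inter> {..<b} - ups w \<inter> {..<a})"
    using sub by blast
  also have "\<dots> \<longleftrightarrow> (\<exists>p\<in>ups w. a \<le> p \<and> p < b)"
    by (auto simp: not_less)
  finally show ?thesis .
qed

definition layered_less :: "bool list \<Rightarrow> nat \<Rightarrow> nat \<Rightarrow> bool" where
  "layered_less w a b \<longleftrightarrow> layer w a < layer w b \<or> (layer w a = layer w b \<and> b < a)"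

lemma transp_layered_less: "transp (layered_less w)"
  by (rule transpI) (auto simp: layered_less_def)

lemma asymp_layered_less: "asymp (layered_less w)"
  by (rule asympI) (auto simp: layered_less_def)

lemma totalp_layered_less: "totalp (layered_less w)"
  by (rule totalpI) (auto simp: layered_less_def)

lemma layered_less_Suc_iff: "layered_less w i (Suc i) \<longleftrightarrow> i \<in> ups w"
  using layer_less_iff[of i "Suc i" w] layer_mono[of i "Suc i" w]
  by (auto simp: layered_less_def le_less_Suc_eq)

text \<open>An ascent at p lies between a and b in value as well: 231 puts xs!b above xs!p,
  312 puts xs!a below xs!Suc p, and 312 on (a, p, b) finishes.\<close>
lemma nth_less_across_ascent:
  assumes "avoids xs [2, 3, 1]" "avoids xs [3, 1, 2]" "distinct xs"
    and "a \<le> p" "p < b" "b < length xs" "xs!p < xs!Suc p"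
  shows "xs!a < xs!b"
proof -
  have no231: "\<not> (xs!k < xs!i \<and> xs!i < xs!j)" if "i < j" "j < k" "k < length xs" for i j k
    using assms(1) that unfolding avoids_231_iff by blast
  have no312: "\<not> (xs!j < xs!k \<and> xs!k < xs!i)" if "i < j" "j < k" "k < length xs" for i j k
    using assms(2) that unfolding avoids_312_iff by blast
  have neq: "xs!i \<noteq> xs!j" if "i < length xs" "j < length xs" "i \<noteq> j" for i j
    using assms(3) that by (simp add: nth_eq_iff_index_eq)
  have above: "xs!p < xs!b"
  proof (cases "b = Suc p")
    case False
    then show ?thesis using no231[of p "Suc p" b] neq[of p b] assms(5-7) by fastforce
  qed (use assms in simp)
  have below: "xs!a < xs!Suc p"
  proof (cases "a = p")
    case False
    then show ?thesis using no312[of a p "Suc p"] neq[of a "Suc p"] assms(4-7) by fastforce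
  qed (use assms in simp)
  show ?thesis
  proof (cases "a = p \<or> b = Suc p")
    case True
    then show ?thesis using above below by auto
  next
    case False
    then show ?thesis using no312[of a p b] neq[of a b] above assms(4-6) by fastforce
  qed
qed

lemma Av2_231_312_nth_less_iff:
  assumes "xs \<in> Av2 n [2, 3, 1] [3, 1, 2]" "a < n" "b < n"
  shows "xs!a < xs!b \<longleftrightarrow> layered_less (updown xs) a b"
proof -
  have avoids: "avoids xs [2, 3, 1]" "avoids xs [3, 1, 2]" and "xs \<in> perms n"
    using assms(1) unfolding Av2_def by auto
  then have length: "length xs = n" and distinct: "distinct xs"
    by (auto simp: perms_length perms_def)
  have "xs!a' < xs!b' \<longleftrightarrow> layered_less (updown xs) a' b'" if "a' < b'" "b' < length xs" for a' b'
  proof -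
    have "layered_less (updown xs) a' b' \<longleftrightarrow> (\<exists>p\<in>ups (updown xs). a' \<le> p \<and> p < b')"
      using that layer_less_iff[of a' b'] by (auto simp: layered_less_def)
    also have "\<dots> \<longleftrightarrow> (\<exists>p. a' \<le> p \<and> p < b' \<and> xs!p < xs!Suc p)"
      using that by (auto simp: in_ups_updown_iff)
    also have "\<dots> \<longleftrightarrow> xs!a' < xs!b'"
    proof
      assume "\<exists>p. a' \<le> p \<and> p < b' \<and> xs!p < xs!Suc p"
      then show "xs!a' < xs!b'" using nth_less_across_ascent[OF avoids distinct] that by blast
    qed (use exists_ascent_between that in blast)
    finally show ?thesis ..
  qed
  then show ?thesis
    using nth_less_iff_from_ordered_pairs[OF distinct asymp_layered_less totalp_layered_less]
      assms(2,3) length by blast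
qed

lemma perm_of_layered_order_in_Av2: "perm_of_order (layered_less w) n \<in> Av2 n [2, 3, 1] [3, 1, 2]"
proof -
  let ?xs = "perm_of_order (layered_less w) n"
  have less_iff: "?xs!a < ?xs!b \<longleftrightarrow> layered_less w a b" if "a < n" "b < n" for a b
    using that order_rank_less_iff[OF transp_layered_less asymp_layered_less totalp_layered_less]
    by simp
  have "avoids ?xs [2, 3, 1]"
    unfolding avoids_231_iff
  proof clarify
    fix i j k assume ijk: "i < j" "j < k" "k < length ?xs" and "?xs!k < ?xs!i" "?xs!i < ?xs!j"
    then have "layered_less w k i" "layered_less w i j" using less_iff by auto
    moreover have "layer w i \<le> layer w j" "layer w j \<le> layer w k" using ijk by (auto intro: layer_mono)
    ultimately show False using ijk by (auto simp: layered_less_def)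
  qed
  moreover have "avoids ?xs [3, 1, 2]"
    unfolding avoids_312_iff
  proof clarify
    fix i j k assume ijk: "i < j" "j < k" "k < length ?xs" and "?xs!j < ?xs!k" "?xs!k < ?xs!i"
    then have "layered_less w j k" "layered_less w k i" using less_iff by auto
    moreover have "layer w i \<le> layer w j" "layer w j \<le> layer w k" using ijk by (auto intro: layer_mono)
    ultimately show False using ijk by (auto simp: layered_less_def)
  qed
  ultimately show ?thesis
    using perm_of_order_in_perms[OF transp_layered_less asymp_layered_less totalp_layered_less]
    by (simp add: Av2_def)
qed

lemma bij_betw_updown_Av2_231_312: "bij_betw updown (Av2 n [2, 3, 1] [3, 1, 2]) {w. length w = n - 1}"
  using transp_layered_less asymp_layered_less totalp_layered_less layered_less_Suc_iff
    perm_of_layered_order_in_Av2 Av2_231_312_nth_less_iff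
  by (rule bij_betw_updown_if_order_determined) (auto simp: Av2_def)

text \<open>The order of the entries of a permutation avoiding 213 and 231: each entry is below all later
  ones if an ascent follows it, and above all later ones otherwise.\<close>
definition minmax_less :: "bool list \<Rightarrow> nat \<Rightarrow> nat \<Rightarrow> bool" where
  "minmax_less w a b \<longleftrightarrow> (a < b \<and> a \<in> ups w) \<or> (b < a \<and> b \<notin> ups w)"

lemma transp_minmax_less: "transp (minmax_less w)"
  unfolding minmax_less_def by (rule transpI) (metis less_trans linorder_neqE_nat)

lemma asymp_minmax_less: "asymp (minmax_less w)"
  by (rule asympI) (auto simp: minmax_less_def)

lemma totalp_minmax_less: "totalp (minmax_less w)"
  by (rule totalpI) (auto simp: minmax_less_def)

lemma minmax_less_Suc_iff: "minmax_less w i (Suc i) \<longleftrightarrow> i \<in> ups w"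
  by (simp add: minmax_less_def)

lemma Av2_213_231_nth_less_iff:
  assumes "xs \<in> Av2 n [2, 1, 3] [2, 3, 1]" "a < n" "b < n"
  shows "xs!a < xs!b \<longleftrightarrow> minmax_less (updown xs) a b"
proof -
  have avoids: "avoids xs [2, 1, 3]" "avoids xs [2, 3, 1]" and "xs \<in> perms n"
    using assms(1) unfolding Av2_def by auto
  then have length: "length xs = n" and distinct: "distinct xs"
    by (auto simp: perms_length perms_def)
  have "xs!a' < xs!b' \<longleftrightarrow> minmax_less (updown xs) a' b'" if "a' < b'" "b' < length xs" for a' b'
  proof -
    have "xs!a' < xs!b' \<longleftrightarrow> xs!a' < xs!Suc a'"
    proof (cases "b' = Suc a'")
      case False
      then have "Suc a' < b'" using that by simp
      moreover have "xs!a' \<noteq> xs!b'" "xs!a' \<noteq> xs!Suc a'"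
        using distinct that by (simp_all add: nth_eq_iff_index_eq)
      ultimately show ?thesis
        using avoids that unfolding avoids_213_iff avoids_231_iff by (meson lessI linorder_neqE)
    qed simp
    then show ?thesis using that by (simp add: minmax_less_def in_ups_updown_iff)
  qed
  then show ?thesis
    using nth_less_iff_from_ordered_pairs[OF distinct asymp_minmax_less totalp_minmax_less]
      assms(2,3) length by blast
qed

lemma perm_of_minmax_order_in_Av2: "perm_of_order (minmax_less w) n \<in> Av2 n [2, 1, 3] [2, 3, 1]"
proof -
  let ?xs = "perm_of_order (minmax_less w) n"
  have less_iff: "?xs!a < ?xs!b \<longleftrightarrow> minmax_less w a b" if "a < n" "b < n" for a b
    using that order_rank_less_iff[OF transp_minmax_less asymp_minmax_less totalp_minmax_less]
    by simp
  have "avoids ?xs [2, 1, 3]" "avoids ?xs [2, 3, 1]"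
    unfolding avoids_213_iff avoids_231_iff using less_iff by (auto simp: minmax_less_def)
  then show ?thesis
    using perm_of_order_in_perms[OF transp_minmax_less asymp_minmax_less totalp_minmax_less]
    by (simp add: Av2_def)
qed

lemma bij_betw_updown_Av2_213_231: "bij_betw updown (Av2 n [2, 1, 3] [2, 3, 1]) {w. length w = n - 1}"
  using transp_minmax_less asymp_minmax_less totalp_minmax_less minmax_less_Suc_iff
    perm_of_minmax_order_in_Av2 Av2_213_231_nth_less_iff
  by (rule bij_betw_updown_if_order_determined) (auto simp: Av2_def)

theorem theorem16:
  fixes n :: nat and t1 t2 t3 t4 :: "'a :: comm_semiring_1"
  shows "(\<Sum>\<pi>\<in>Av2 n [2,3,1] [3,1,2]. t1 ^ asc \<pi> * t2 ^ des \<pi> * t3 ^ MNA \<pi> * t4 ^ MND \<pi>)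
       = (\<Sum>\<sigma>\<in>Av2 n [2,1,3] [2,3,1]. t1 ^ asc \<sigma> * t2 ^ des \<sigma> * t3 ^ MNA \<sigma> * t4 ^ MND \<sigma>)"
proof -
  define g where "g w = t1 ^ card (ups w) * t2 ^ card (downs w) *
    t3 ^ Max (card ` {I. I \<subseteq> ups w \<and> nonadjacent I}) *
    t4 ^ Max (card ` {I. I \<subseteq> downs w \<and> nonadjacent I})" for w
  have weight: "t1 ^ asc \<pi> * t2 ^ des \<pi> * t3 ^ MNA \<pi> * t4 ^ MND \<pi> = g (updown \<pi>)"
    if "\<pi> \<in> Av2 n \<tau> \<rho>" for \<pi> \<tau> \<rho>
    using that by (simp add: g_def asc_def des_def MNA_def MND_def Av2_def perms_def
        ascset_eq_ups_updown desset_eq_downs_updown)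
  have "(\<Sum>\<pi>\<in>Av2 n [2,3,1] [3,1,2]. t1 ^ asc \<pi> * t2 ^ des \<pi> * t3 ^ MNA \<pi> * t4 ^ MND \<pi>)
      = (\<Sum>w | length w = n - 1. g w)"
    using sum.reindex_bij_betw[OF bij_betw_updown_Av2_231_312] weight by (metis (no_types, lifting) sum.cong)
  also have "\<dots> = (\<Sum>\<sigma>\<in>Av2 n [2,1,3] [2,3,1]. t1 ^ asc \<sigma> * t2 ^ des \<sigma> * t3 ^ MNA \<sigma> * t4 ^ MND \<sigma>)"
    using sum.reindex_bij_betw[OF bij_betw_updown_Av2_213_231] weight by (metis (no_types, lifting) sum.cong)
  finally show ?thesis .
qed

end
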